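(* Let a group $G$ act freely and cospecially by combinatorial isometries on a CAT(0) cube complex $X$. Let $A_1,A_2$ be parallel convex subcomplexes of $X$. Assume that for every $g\in G$ and $i\in\{1,2\}$, either $gA_i = A_i$ or $gA_i\cap A_i=\emptyset$. Then $\mathrm{Stab}(A_1) = \mathrm{Stab}(A_2)$.
   Context: Two convex subcomplexes are parallel if the sets of hyperplanes dual to their edges coincide. An action is cospecial if the quotient $X/G$ is a special cube complex in the sense of Haglund–Wise. $\mathrm{Stab}(A)$ is the setwise stabilizer of $A$ in $G$. *)

theory Defs
  imports Main "HOL-Algebra.Group_Action"
begin

text \<open>A CAT(0) cube complex X is modelled by its 1-skeleton (vertex set V, adjacency adj),
which is a median graph (Chepoi / Roller / Gerasimov); cubes of X are exactly the
vertex sets of induced hypercube subgraphs, hyperplanes are the Djokovic-Winkler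
classes of edges, combinatorial isometries are graph automorphisms.\<close>

definition walk :: "'v set \<Rightarrow> ('v \<Rightarrow> 'v \<Rightarrow> bool) \<Rightarrow> 'v list \<Rightarrow> bool" where
  "walk V adj xs \<longleftrightarrow> xs \<noteq> [] \<and> set xs \<subseteq> V \<and>
     (\<forall>i. Suc i < length xs \<longrightarrow> adj (xs ! i) (xs ! Suc i))"

definition gdist :: "'v set \<Rightarrow> ('v \<Rightarrow> 'v \<Rightarrow> bool) \<Rightarrow> 'v \<Rightarrow> 'v \<Rightarrow> nat" where
  "gdist V adj u v = (LEAST n. \<exists>xs. walk V adj xs \<and> hd xs = u \<and> last xs = v \<and> length xs = Suc n)"

definition ginterval :: "'v set \<Rightarrow> ('v \<Rightarrow> 'v \<Rightarrow> bool) \<Rightarrow> 'v \<Rightarrow> 'v \<Rightarrow> 'v set" where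
  "ginterval V adj u v = {x \<in> V. gdist V adj u x + gdist V adj x v = gdist V adj u v}"

definition median_graph :: "'v set \<Rightarrow> ('v \<Rightarrow> 'v \<Rightarrow> bool) \<Rightarrow> bool" where
  "median_graph V adj \<longleftrightarrow>
     (\<forall>a b. adj a b \<longrightarrow> a \<in> V \<and> b \<in> V) \<and>
     (\<forall>a b. adj a b \<longrightarrow> adj b a) \<and> (\<forall>a. \<not> adj a a) \<and>
     (\<forall>u\<in>V. \<forall>v\<in>V. \<exists>xs. walk V adj xs \<and> hd xs = u \<and> last xs = v) \<and>
     (\<forall>u\<in>V. \<forall>v\<in>V. \<forall>w\<in>V. \<exists>!m. m \<in> ginterval V adj u v \<and> m \<in> ginterval V adj v w
                                    \<and> m \<in> ginterval V adj u w)"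

abbreviation cat0_cube_complex :: "'v set \<Rightarrow> ('v \<Rightarrow> 'v \<Rightarrow> bool) \<Rightarrow> bool" where
  "cat0_cube_complex \<equiv> median_graph"

definition is_cube :: "'v set \<Rightarrow> ('v \<Rightarrow> 'v \<Rightarrow> bool) \<Rightarrow> 'v set \<Rightarrow> bool" where
  "is_cube V adj C \<longleftrightarrow> C \<subseteq> V \<and> (\<exists>(n::nat) f. bij_betw f (Pow {..<n}) C \<and>
     (\<forall>S\<in>Pow {..<n}. \<forall>T\<in>Pow {..<n}. adj (f S) (f T) \<longleftrightarrow> card ((S - T) \<union> (T - S)) = 1))"

definition convex_subcomplex :: "'v set \<Rightarrow> ('v \<Rightarrow> 'v \<Rightarrow> bool) \<Rightarrow> 'v set \<Rightarrow> bool" where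
  "convex_subcomplex V adj A \<longleftrightarrow> A \<noteq> {} \<and> A \<subseteq> V \<and>
     (\<forall>u\<in>A. \<forall>v\<in>A. ginterval V adj u v \<subseteq> A)"

text \<open>Hyperplane dual to the edge {a,b}: its Djokovic-Winkler class (set of undirected edges).\<close>
definition hyp :: "'v set \<Rightarrow> ('v \<Rightarrow> 'v \<Rightarrow> bool) \<Rightarrow> 'v \<Rightarrow> 'v \<Rightarrow> 'v set set" where
  "hyp V adj a b = {{c, d} | c d. c \<in> V \<and> d \<in> V \<and> adj c d \<and>
      gdist V adj a c + gdist V adj b d \<noteq> gdist V adj a d + gdist V adj b c}"

definition hyperplanes :: "'v set \<Rightarrow> ('v \<Rightarrow> 'v \<Rightarrow> bool) \<Rightarrow> 'v set set set" where
  "hyperplanes V adj = {hyp V adj a b | a b. a \<in> V \<and> b \<in> V \<and> adj a b}"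

definition halfspace :: "'v set \<Rightarrow> ('v \<Rightarrow> 'v \<Rightarrow> bool) \<Rightarrow> 'v \<Rightarrow> 'v \<Rightarrow> 'v set" where
  "halfspace V adj a b = {x \<in> V. gdist V adj x a < gdist V adj x b}"

definition crosses :: "'v set \<Rightarrow> ('v \<Rightarrow> 'v \<Rightarrow> bool) \<Rightarrow> 'v set set \<Rightarrow> 'v set set \<Rightarrow> bool" where
  "crosses V adj H K \<longleftrightarrow> (\<exists>a\<in>V. \<exists>b\<in>V. \<exists>c\<in>V. \<exists>d\<in>V.
      adj a b \<and> adj b c \<and> adj c d \<and> adj d a \<and> a \<noteq> c \<and> b \<noteq> d \<and> {a, b} \<in> H \<and> {b, c} \<in> K)"

definition spans_square :: "'v set \<Rightarrow> ('v \<Rightarrow> 'v \<Rightarrow> bool) \<Rightarrow> 'v \<Rightarrow> 'v \<Rightarrow> 'v \<Rightarrow> bool" where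
  "spans_square V adj v w1 w2 \<longleftrightarrow> (\<exists>u\<in>V. u \<noteq> v \<and> adj w1 u \<and> adj w2 u)"

definition translate :: "('v \<Rightarrow> 'v) \<Rightarrow> 'v set set \<Rightarrow> 'v set set" where
  "translate f H = (\<lambda>e. f ` e) ` H"

definition acts_by_isometries ::
  "('g, 'b) monoid_scheme \<Rightarrow> 'v set \<Rightarrow> ('v \<Rightarrow> 'v \<Rightarrow> bool) \<Rightarrow> ('g \<Rightarrow> 'v \<Rightarrow> 'v) \<Rightarrow> bool" where
  "acts_by_isometries G V adj \<phi> \<longleftrightarrow> group_action G V \<phi> \<and>
     (\<forall>g\<in>carrier G. \<forall>a\<in>V. \<forall>b\<in>V. adj (\<phi> g a) (\<phi> g b) \<longleftrightarrow> adj a b)"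

text \<open>Free: no nontrivial element fixes a point of X, i.e. stabilizes a cube.\<close>
definition acts_freely ::
  "('g, 'b) monoid_scheme \<Rightarrow> 'v set \<Rightarrow> ('v \<Rightarrow> 'v \<Rightarrow> bool) \<Rightarrow> ('g \<Rightarrow> 'v \<Rightarrow> 'v) \<Rightarrow> bool" where
  "acts_freely G V adj \<phi> \<longleftrightarrow>
     (\<forall>g\<in>carrier G. g \<noteq> \<one>\<^bsub>G\<^esub> \<longrightarrow> (\<forall>C. is_cube V adj C \<longrightarrow> \<phi> g ` C \<noteq> C))"

text \<open>Cospecial (for a free action): X/G is special in the sense of Haglund-Wise, i.e. its
hyperplanes are two-sided, do not self-intersect, do not directly self-osculate, and no two
of them inter-osculate; all conditions lifted to X.\<close>
definition acts_cospecially ::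
  "('g, 'b) monoid_scheme \<Rightarrow> 'v set \<Rightarrow> ('v \<Rightarrow> 'v \<Rightarrow> bool) \<Rightarrow> ('g \<Rightarrow> 'v \<Rightarrow> 'v) \<Rightarrow> bool" where
  "acts_cospecially G V adj \<phi> \<longleftrightarrow>
     \<comment> \<open>no self-intersection\<close>
     (\<forall>H\<in>hyperplanes V adj. \<forall>g\<in>carrier G. \<not> crosses V adj H (translate (\<phi> g) H)) \<and>
     \<comment> \<open>two-sidedness\<close>
     (\<forall>a\<in>V. \<forall>b\<in>V. adj a b \<longrightarrow>
        (\<forall>g\<in>carrier G. \<phi> g ` halfspace V adj a b \<noteq> halfspace V adj b a)) \<and>
     \<comment> \<open>no direct self-osculation\<close>
     (\<not> (\<exists>v\<in>V. \<exists>w1\<in>V. \<exists>w2\<in>V. \<exists>g\<in>carrier G.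
          adj v w1 \<and> adj v w2 \<and> w1 \<noteq> w2 \<and>
          \<phi> g ` halfspace V adj v w1 = halfspace V adj v w2 \<and>
          \<not> (\<exists>h\<in>carrier G. \<phi> h ` {v, w1} = {v, w2}) \<and>
          \<not> spans_square V adj v w1 w2)) \<and>
     \<comment> \<open>no inter-osculation\<close>
     (\<not> (\<exists>H1\<in>hyperplanes V adj. \<exists>H2\<in>hyperplanes V adj. crosses V adj H1 H2 \<and>
          (\<exists>g\<in>carrier G. \<exists>v\<in>V. \<exists>w1\<in>V. \<exists>w2\<in>V.
             adj v w1 \<and> adj v w2 \<and> w1 \<noteq> w2 \<and> {v, w1} \<in> H1 \<and>
             {v, w2} \<in> translate (\<phi> g) H2 \<and> \<not> spans_square V adj v w1 w2)))"

definition parallel :: "'v set \<Rightarrow> ('v \<Rightarrow> 'v \<Rightarrow> bool) \<Rightarrow> 'v set \<Rightarrow> 'v set \<Rightarrow> bool" where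
  "parallel V adj A B \<longleftrightarrow>
     {hyp V adj a b | a b. a \<in> A \<and> b \<in> A \<and> adj a b} = {hyp V adj a b | a b. a \<in> B \<and> b \<in> B \<and> adj a b}"

definition Stab :: "('g, 'b) monoid_scheme \<Rightarrow> ('g \<Rightarrow> 'v \<Rightarrow> 'v) \<Rightarrow> 'v set \<Rightarrow> 'g set" where
  "Stab G \<phi> A = {g \<in> carrier G. \<phi> g ` A = A}"

end

theory Submission
  imports Defs
begin

(*
  Let g stabilise A1. Take a closest pair p \<in> A1, q \<in> A2 and the first edge p p1 of a
  geodesic from p to q. The hyperplane H dual to p p1 separates A1 from A2, and as A1 and A2
  are parallel every vertex of A1 has a neighbour across H; these neighbours form a convex
  subcomplex A1' parallel to A1, hence to A2, and strictly closer to A2. Since g A1 = A1, the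
  translate gH is again dual to an edge p p2 at p. If p1 \<noteq> p2, the hyperplanes H and gH either
  span a square at p (H self-intersects), or directly self-osculate, which cospecialness only
  allows when some h maps p p1 to p p2; h fixing p contradicts freeness, and h swapping the two
  vertices makes h\<inverse> g exchange the sides of H, contradicting two-sidedness. So g fixes H with
  its sides, stabilises A1', and induction on the distance ends when the subcomplexes meet,
  where parallelism and convexity force A1 = A2.

  Hyperplanes are handled through the halfspaces W a b = {x. d x a < d x b}; the
  Djokovic-Winkler argument shows that all edges crossing from W a b to W b a define the same
  halfspace.
*)

section \<open>Distances in median graphs\<close>

lemma walk_Cons_Cons:
  "walk V adj (x # y # xs) \<longleftrightarrow> x \<in> V \<and> adj x y \<and> walk V adj (y # xs)"
  by (auto simp: walk_def nth_Cons less_Suc_eq_0_disj split: nat.splits)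

lemma walk_append:
  "walk V adj xs \<Longrightarrow> walk V adj (y # ys) \<Longrightarrow> last xs = y \<Longrightarrow> walk V adj (xs @ ys)"
proof (induction xs rule: induct_list012)
  case 1
  then show ?case by (simp add: walk_def)
next
  case (2 x)
  then show ?case by simp
next
  case (3 x z zs)
  then show ?case by (simp add: walk_Cons_Cons)
qed

lemma gdist_le_walk:
  "walk V adj xs \<Longrightarrow> hd xs = u \<Longrightarrow> last xs = v \<Longrightarrow> length xs = Suc n \<Longrightarrow> gdist V adj u v \<le> n"
  unfolding gdist_def by (rule Least_le) blast

locale median =
  fixes V :: "'v set" and adj :: "'v \<Rightarrow> 'v \<Rightarrow> bool"
  assumes median_graph: "median_graph V adj"
begin

abbreviation "d \<equiv> gdist V adj"
abbreviation "I \<equiv> ginterval V adj"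
abbreviation "W \<equiv> halfspace V adj"

lemma adj_in_V: "adj a b \<Longrightarrow> a \<in> V \<and> b \<in> V"
  using median_graph unfolding median_graph_def by blast

lemma adj_sym: "adj a b \<Longrightarrow> adj b a"
  using median_graph unfolding median_graph_def by blast

lemma adj_irrefl: "\<not> adj a a"
  using median_graph unfolding median_graph_def by blast

lemma walk_exists: "u \<in> V \<Longrightarrow> v \<in> V \<Longrightarrow> \<exists>xs. walk V adj xs \<and> hd xs = u \<and> last xs = v"
  using median_graph unfolding median_graph_def by blast

lemma median_exists_unique:
  "u \<in> V \<Longrightarrow> v \<in> V \<Longrightarrow> w \<in> V \<Longrightarrow> \<exists>!m. m \<in> I u v \<and> m \<in> I v w \<and> m \<in> I u w"
  using median_graph unfolding median_graph_def by blast

lemma ginterval_iff: "m \<in> I u v \<longleftrightarrow> m \<in> V \<and> d u m + d m v = d u v"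
  by (simp add: ginterval_def)

lemma walk_rev: "walk V adj xs \<Longrightarrow> walk V adj (rev xs)"
proof (induction xs rule: induct_list012)
  case 1
  then show ?case by (simp add: walk_def)
next
  case (2 x)
  then show ?case by simp
next
  case (3 x z zs)
  then have "walk V adj (rev (z # zs))"
    by (simp add: walk_Cons_Cons)
  moreover have "walk V adj [z, x]"
    using "3.prems" by (auto simp: walk_Cons_Cons walk_def adj_sym adj_in_V)
  ultimately have "walk V adj (rev (z # zs) @ [x])"
    by (intro walk_append) auto
  then show ?case by simp
qed

lemma shortest_walk:
  assumes "u \<in> V" "v \<in> V"
  obtains xs where "walk V adj xs" "hd xs = u" "last xs = v" "length xs = Suc (d u v)"
proof -
  obtain xs where xs: "walk V adj xs" "hd xs = u" "last xs = v"
    using walk_exists assms by blast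
  then have "length xs = Suc (length xs - 1)"
    by (cases xs) (auto simp: walk_def)
  with xs have "\<exists>n xs. walk V adj xs \<and> hd xs = u \<and> last xs = v \<and> length xs = Suc n"
    by blast
  from LeastI_ex[OF this] show ?thesis
    using that unfolding gdist_def by blast
qed

lemma gdist_refl: "u \<in> V \<Longrightarrow> d u u = 0"
  using gdist_le_walk[of V adj "[u]" u u 0] by (simp add: walk_def)

lemma gdist_eq_0_iff: "u \<in> V \<Longrightarrow> v \<in> V \<Longrightarrow> d u v = 0 \<longleftrightarrow> u = v"
  by (metis gdist_refl shortest_walk last_ConsL length_0_conv length_Suc_conv list.sel(1))

lemma gdist_sym:
  assumes "u \<in> V" "v \<in> V"
  shows "d u v = d v u"
proof -
  have le: "d b a \<le> d a b" if ab: "a \<in> V" "b \<in> V" for a b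
  proof -
    obtain xs where xs: "walk V adj xs" "hd xs = a" "last xs = b" "length xs = Suc (d a b)"
      using shortest_walk[OF ab] by blast
    then have "xs \<noteq> []" by auto
    with xs show ?thesis
      by (intro gdist_le_walk[OF walk_rev]) (auto simp: hd_rev last_rev)
  qed
  show ?thesis
    using le[OF assms] le[OF assms(2,1)] by simp
qed

lemma gdist_triangle:
  assumes V: "u \<in> V" "v \<in> V" "w \<in> V"
  shows "d u w \<le> d u v + d v w"
proof -
  obtain xs where xs: "walk V adj xs" "hd xs = u" "last xs = v" "length xs = Suc (d u v)"
    using shortest_walk V by blast
  obtain ys where ys: "walk V adj ys" "hd ys = v" "last ys = w" "length ys = Suc (d v w)"
    using shortest_walk V by blast
  then obtain ys' where ys': "ys = v # ys'"
    by (cases ys) auto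
  have "walk V adj (xs @ ys')"
    using xs ys ys' by (intro walk_append) auto
  moreover have "xs \<noteq> []" "last (xs @ ys') = w"
    using xs ys ys' by auto
  ultimately show ?thesis
    using xs ys ys' by (intro gdist_le_walk) auto
qed

lemma gdist_adj: "adj u v \<Longrightarrow> d u v = 1"
proof -
  assume uv: "adj u v"
  then have "walk V adj [u, v]"
    using adj_in_V by (simp add: walk_Cons_Cons walk_def)
  then have "d u v \<le> 1"
    by (intro gdist_le_walk) auto
  moreover have "d u v \<noteq> 0"
    using gdist_eq_0_iff uv adj_in_V adj_irrefl by metis
  ultimately show ?thesis by simp
qed

lemma adj_iff_gdist_1: "u \<in> V \<Longrightarrow> v \<in> V \<Longrightarrow> adj u v \<longleftrightarrow> d u v = 1"
proof
  assume V: "u \<in> V" "v \<in> V" and "d u v = 1"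
  then obtain xs where "walk V adj xs" "hd xs = u" "last xs = v" "length xs = 2"
    using shortest_walk by (metis one_add_one plus_1_eq_Suc)
  then show "adj u v"
    by (auto simp: length_Suc_conv numeral_2_eq_2 walk_Cons_Cons)
qed (rule gdist_adj)

lemma gdist_SucE:
  assumes "u \<in> V" "v \<in> V" "d u v = Suc k"
  obtains w where "adj u w" "d w v = k"
proof -
  obtain xs where xs: "walk V adj xs" "hd xs = u" "last xs = v" "length xs = Suc (Suc k)"
    using shortest_walk assms by metis
  then obtain w ys where ys: "xs = u # w # ys"
    by (auto simp: length_Suc_conv)
  with xs have uw: "adj u w" and wv: "walk V adj (w # ys)"
    by (auto simp: walk_Cons_Cons)
  then have "d w v \<le> k"
    using xs ys by (intro gdist_le_walk[OF wv]) auto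
  moreover have "d u v \<le> d u w + d w v"
    using gdist_triangle uw adj_in_V assms by blast
  ultimately show ?thesis
    using that uw gdist_adj[OF uw] assms by auto
qed

lemma gdist_adj_le: "adj a b \<Longrightarrow> x \<in> V \<Longrightarrow> d x a \<le> d x b + 1"
  using gdist_triangle[of x b a] gdist_adj[OF adj_sym] adj_in_V by fastforce

lemma gdist_adj_neq: "adj a b \<Longrightarrow> x \<in> V \<Longrightarrow> d x a \<noteq> d x b"
proof
  assume ab: "adj a b" and x: "x \<in> V" and eq: "d x a = d x b"
  have V: "a \<in> V" "b \<in> V" "d a b = 1" "d b a = 1"
    using ab adj_in_V gdist_adj adj_sym by auto
  obtain m where m: "m \<in> I x a" "m \<in> I a b" "m \<in> I x b"
    using median_exists_unique[OF x V(1,2)] by blast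
  then have "m \<in> V" "d a m + d m b = 1"
    using V by (auto simp: ginterval_iff)
  then have "m = a \<or> m = b"
    using gdist_eq_0_iff[of a m] gdist_eq_0_iff[of m b] V by (auto simp: add_is_1)
  then show False
    using m eq V by (auto simp: ginterval_iff)
qed

lemma gdist_adj_cases: "adj a b \<Longrightarrow> x \<in> V \<Longrightarrow> d x b = Suc (d x a) \<or> d x a = Suc (d x b)"
  using gdist_adj_le[of a b x] gdist_adj_le[of b a x] gdist_adj_neq[of a b x] adj_sym by fastforce

lemma ginterval_stepE:
  assumes V: "x \<in> V" "y \<in> V" and z: "z \<in> I x y" and xz: "d x z = Suc k"
  obtains z' where "adj z z'" "d x z' = k" "z' \<in> I x y"
proof -
  have zV: "z \<in> V" and xzy: "d x z + d z y = d x y"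
    using z by (auto simp: ginterval_iff)
  have "d z x = Suc k"
    using xz gdist_sym[OF V(1) zV] by simp
  then obtain z' where z': "adj z z'" "d z' x = k"
    using gdist_SucE[OF zV V(1)] by blast
  have z'V: "z' \<in> V"
    using adj_in_V z' by auto
  have xz': "d x z' = k"
    using z'(2) gdist_sym[OF V(1) z'V] by simp
  have "d z' y \<le> d z' z + d z y"
    using gdist_triangle[OF z'V zV V(2)] .
  moreover have "d x y \<le> d x z' + d z' y"
    using gdist_triangle[OF V(1) z'V V(2)] .
  ultimately have "d x z' + d z' y = d x y"
    using xz' xzy xz gdist_adj[OF adj_sym[OF z'(1)]] by simp
  then show thesis
    using that z'(1) xz' z'V by (simp add: ginterval_iff)
qed

lemma median_unique:
  assumes "u \<in> V" "v \<in> V" "w \<in> V"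
    and "m \<in> I u v" "m \<in> I v w" "m \<in> I u w" "m' \<in> I u v" "m' \<in> I v w" "m' \<in> I u w"
  shows "m = m'"
  using median_exists_unique[OF assms(1-3)] assms(4-) by blast

lemma common_neighbour_in_interval:
  assumes "adj x a" "adj x b" "a \<noteq> b"
  shows "d a b = 2" "x \<in> I a b"
proof -
  have V: "x \<in> V" "a \<in> V" "b \<in> V" and ax: "d a x = 1" and xb: "d x b = 1"
    using assms adj_in_V gdist_adj adj_sym by auto
  have "d a b \<le> 2"
    using gdist_triangle[of a x b] V ax xb by simp
  moreover have "d a b \<noteq> 0"
    using gdist_eq_0_iff V assms by blast
  moreover have "\<not> adj a b"
    using gdist_adj_neq[of a b x] gdist_adj[OF assms(1)] gdist_adj[OF assms(2)] V by auto
  then have "d a b \<noteq> 1"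
    using adj_iff_gdist_1 V by blast
  ultimately show "d a b = 2" by simp
  then show "x \<in> I a b"
    using V ax xb by (simp add: ginterval_iff)
qed

lemma quadrangle:
  assumes "adj x u" "adj x v" "u \<noteq> v" "w \<in> V" "d u w = d v w"
  obtains y where "adj y u" "adj y v" "Suc (d y w) = d u w"
proof -
  have V: "u \<in> V" "v \<in> V"
    using adj_in_V assms by auto
  obtain m where m: "m \<in> I u v" "m \<in> I v w" "m \<in> I u w"
    using median_exists_unique[OF V assms(4)] by blast
  then have mV: "m \<in> V"
    by (simp add: ginterval_iff)
  have "d u m + d m v = 2" "d v m + d m w = d v w" "d u m + d m w = d u w"
    using m common_neighbour_in_interval(1)[OF assms(1-3)] by (auto simp: ginterval_iff)
  moreover have "d m v = d v m"
    using gdist_sym mV V by simp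
  ultimately have "d u m = 1" "d v m = 1" "Suc (d m w) = d u w"
    using assms(5) by auto
  then show ?thesis
    using that adj_iff_gdist_1 gdist_sym mV V by metis
qed

section \<open>Halfspaces and hyperplanes\<close>

lemma halfspace_iff: "x \<in> W a b \<longleftrightarrow> x \<in> V \<and> d x a < d x b"
  by (simp add: halfspace_def)

lemma halfspace_subset_V: "W a b \<subseteq> V"
  by (auto simp: halfspace_iff)

lemma halfspace_swap: "adj a b \<Longrightarrow> W b a = V - W a b"
  using gdist_adj_neq by (fastforce simp: halfspace_iff)

lemma halfspace_gdist: "adj a b \<Longrightarrow> x \<in> W a b \<Longrightarrow> d x b = Suc (d x a)"
  using gdist_adj_cases by (fastforce simp: halfspace_iff)

lemma halfspace_self: "adj a b \<Longrightarrow> a \<in> W a b"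
  using gdist_refl adj_in_V gdist_adj by (auto simp: halfspace_iff)

lemma square_halfspace_subset:
  assumes ab: "adj a b" and bb': "adj b b'" and b'a': "adj b' a'" and a'a: "adj a' a"
    and ab': "a \<noteq> b'" and ba': "b \<noteq> a'"
  shows "W a' b' \<subseteq> W a b"
proof
  fix y assume y: "y \<in> W a' b'"
  then have yV: "y \<in> V"
    by (simp add: halfspace_iff)
  have yb': "d y b' = Suc (d y a')"
    using halfspace_gdist[OF adj_sym[OF b'a'] y] .
  show "y \<in> W a b"
  proof (rule ccontr)
    assume "y \<notin> W a b"
    then have "d y a = Suc (d y b)"
      using halfspace_gdist[OF adj_sym[OF ab]] halfspace_swap[OF ab] yV by blast
    with yb' have ya: "d y a = Suc (d y a')" and yb: "d y b = d y a'"
      using gdist_adj_cases[OF a'a yV] gdist_adj_cases[OF bb' yV] by arith+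
    have V: "a \<in> V" "b \<in> V" "a' \<in> V" "b' \<in> V"
      using adj_in_V assms by auto
    obtain u where u: "adj u a'" "adj u b" "Suc (d u y) = d a' y"
      using quadrangle[OF adj_sym[OF a'a] ab ba'[symmetric] yV] yb gdist_sym[OF yV] V by auto
    have uV: "u \<in> V"
      using adj_in_V u by blast
    have "a \<noteq> u" "b' \<noteq> u"
      using u ya yb' gdist_sym[OF yV] V uV by auto
    txt \<open>Both a' and b are medians of a, b', u.\<close>
    then have "a' = b"
      using common_neighbour_in_interval(2) adj_sym[OF u(1)] adj_sym[OF u(2)] adj_sym[OF ab]
        adj_sym[OF b'a'] a'a bb' ab'
      by (intro median_unique[of a b' u]) (simp_all add: V uV)
    with ba' show False by simp
  qed
qed

lemma crossing_edge_square:
  assumes ab: "adj a b" and ce: "adj c e" and c: "c \<in> W a b" and e: "e \<in> W b a"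
    and ca: "d c a = Suc m"
  obtains c1 d1 where "adj c c1" "adj d1 e" "adj d1 c1" "c1 \<in> W a b" "d c1 a = m" "d d1 b = m"
    "c \<noteq> d1" "e \<noteq> c1"
proof -
  have V: "a \<in> V" "b \<in> V" "c \<in> V" "e \<in> V"
    using adj_in_V ab ce by auto
  obtain c1 where c1: "adj c c1" "d c1 a = m"
    using gdist_SucE[OF V(3,1) ca] by blast
  have c1V: "c1 \<in> V"
    using adj_in_V c1 by auto
  have cb: "d c b = Suc (Suc m)"
    using halfspace_gdist[OF ab c] ca by simp
  have c1b: "d c1 b = Suc m"
    using gdist_adj_cases[OF ab c1V] gdist_adj_cases[OF c1(1) V(2)] c1(2) cb
      gdist_sym[OF V(2) c1V] gdist_sym[OF V(2) V(3)]
    by arith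
  have c1W: "c1 \<in> W a b"
    using c1 c1b c1V by (simp add: halfspace_iff)
  have eb: "d e b = Suc m"
    using gdist_adj_cases[OF ce V(1)] gdist_adj_cases[OF ce V(2)] halfspace_gdist[OF adj_sym[OF ab] e]
      cb ca gdist_sym[OF V(1) V(3)] gdist_sym[OF V(1) V(4)] gdist_sym[OF V(2) V(3)] gdist_sym[OF V(2) V(4)]
    by arith
  have ec1: "e \<noteq> c1"
    using c1W e halfspace_swap[OF ab] by blast
  obtain d1 where d1: "adj d1 e" "adj d1 c1" "d d1 b = m"
    using quadrangle[OF ce c1(1) ec1 V(2)] eb c1b by (metis Suc_inject)
  have "c \<noteq> d1"
    using cb d1(3) by auto
  with c1 c1W d1 ec1 show thesis
    using that by blast
qed

text \<open>Induction on d c a: the square c e d1 c1 of crossing_edge_square moves the crossing edge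
  one step towards a.\<close>
lemma halfspace_subset_crossing_edge:
  assumes "adj a b" "adj c e" "c \<in> W a b" "e \<in> W b a"
  shows "W a b \<subseteq> W c e"
  using assms
proof (induction "d c a" arbitrary: c e rule: less_induct)
  case less
  have V: "a \<in> V" "b \<in> V" "c \<in> V" "e \<in> V"
    using adj_in_V less.prems by auto
  show ?case
  proof (cases "d c a")
    case 0
    then have "c = a"
      using gdist_eq_0_iff V by blast
    then have "d e a = 1"
      using gdist_adj[OF adj_sym[OF less.prems(2)]] by simp
    then have "d e b = 0"
      using less.prems(4) by (simp add: halfspace_iff)
    then have "e = b"
      using gdist_eq_0_iff V by blast
    with \<open>c = a\<close> show ?thesis by simp
  next
    case (Suc m)
    obtain c1 d1 where sq: "adj c c1" "adj d1 e" "adj d1 c1" and c1: "c1 \<in> W a b" "d c1 a = m"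
      and d1b: "d d1 b = m" and ne: "c \<noteq> d1" "e \<noteq> c1"
      using crossing_edge_square[OF less.prems Suc] .
    have d1V: "d1 \<in> V"
      using adj_in_V sq(2) by auto
    have "d1 \<notin> W a b"
    proof
      assume d1W: "d1 \<in> W a b"
      then have "d d1 a < d c a"
        using d1b Suc by (simp add: halfspace_iff)
      then have "W a b \<subseteq> W d1 e"
        using less.hyps less.prems(1,4) sq(2) d1W by blast
      then have "d c d1 < d c e"
        using less.prems(3) by (auto simp: halfspace_iff)
      then have "d c d1 = 0"
        using gdist_adj[OF less.prems(2)] by simp
      then show False
        using ne(1) gdist_eq_0_iff V d1V by blast
    qed
    then have "d1 \<in> W b a"
      using halfspace_swap[OF less.prems(1)] d1V by blast
    moreover have "d c1 a < d c a"
      using c1(2) Suc by simp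
    ultimately have "W a b \<subseteq> W c1 d1"
      using less.hyps less.prems(1) c1(1) adj_sym[OF sq(3)] by blast
    also have "W c1 d1 \<subseteq> W c e"
      using square_halfspace_subset[OF less.prems(2) adj_sym[OF sq(2)] sq(3) adj_sym[OF sq(1)] ne] .
    finally show ?thesis .
  qed
qed

lemma halfspace_crossing_edge:
  assumes "adj a b" "adj c e" "c \<in> W a b" "e \<in> W b a"
  shows "W c e = W a b"
proof -
  have "W a b \<subseteq> W c e"
    using halfspace_subset_crossing_edge[OF assms] .
  moreover have "W b a \<subseteq> W e c"
    using halfspace_subset_crossing_edge[OF adj_sym[OF assms(1)] adj_sym[OF assms(2)] assms(4,3)] .
  ultimately show ?thesis
    using halfspace_swap[OF assms(1)] halfspace_swap[OF assms(2)] halfspace_subset_V by blast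
qed

lemma square_halfspace:
  assumes ab: "adj a b" and bb': "adj b b'" and b'a': "adj b' a'" and a'a: "adj a' a"
    and "a \<noteq> b'" "b \<noteq> a'"
  shows "W a' b' = W a b"
proof (rule halfspace_crossing_edge[OF ab adj_sym[OF b'a']])
  have "d a' b = 2" "d b' a = 2"
    using common_neighbour_in_interval(1)[OF adj_sym[OF a'a] ab] common_neighbour_in_interval(1)[OF bb' adj_sym[OF ab]] assms
    by auto
  moreover have "d a' a = 1" "d b' b = 1"
    using gdist_adj a'a adj_sym[OF bb'] by blast+
  ultimately show "a' \<in> W a b" "b' \<in> W b a"
    using adj_in_V assms by (auto simp: halfspace_iff)
qed

lemma halfspace_convex:
  assumes ab: "adj a b" and x: "x \<in> W a b" and y: "y \<in> W a b"
  shows "z \<in> I x y \<Longrightarrow> z \<in> W a b"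
proof (induction "d x z" arbitrary: z)
  case 0
  then show ?case
    using x gdist_eq_0_iff by (auto simp: ginterval_iff halfspace_iff)
next
  case (Suc k z)
  have V: "x \<in> V" "y \<in> V" "z \<in> V"
    using Suc.prems x y by (auto simp: ginterval_iff halfspace_iff)
  obtain z' where z': "adj z z'" "d x z' = k" "z' \<in> I x y"
    using ginterval_stepE[OF V(1,2) Suc.prems Suc.hyps(2)[symmetric]] .
  then have z'W: "z' \<in> W a b"
    using Suc.hyps(1) by simp
  show ?case
  proof (rule ccontr)
    assume "z \<notin> W a b"
    then have "z \<in> W b a"
      using halfspace_swap[OF ab] V by blast
    then have "W z' z = W a b"
      using halfspace_crossing_edge[OF ab adj_sym[OF z'(1)] z'W] by blast
    with y have "y \<in> W z' z"
      by simp
    then have "d y z' < d y z"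
      by (simp add: halfspace_iff)
    moreover have "z' \<in> V" "d x z' + d z' y = d x y" "d x z + d z y = d x y"
      using z'(3) Suc.prems by (simp_all add: ginterval_iff)
    ultimately show False
      using z'(2) Suc.hyps(2) gdist_sym[OF V(2) V(3)] gdist_sym[OF V(2)] by simp
  qed
qed

lemma halfspace_swap_eq: "adj a b \<Longrightarrow> adj c e \<Longrightarrow> W c e = W a b \<Longrightarrow> W e c = W b a"
  by (simp add: halfspace_swap)

lemma hyp_eq_separated_edges:
  assumes ab: "adj a b"
  shows "hyp V adj a b = {{x, y} | x y. adj x y \<and> x \<in> W a b \<and> y \<in> W b a}"
proof (intro subset_antisym subsetI)
  have abV: "a \<in> V" "b \<in> V"
    using adj_in_V ab by auto
  fix z assume "z \<in> hyp V adj a b"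
  then obtain c e where z: "z = {c, e}" and V: "c \<in> V" "e \<in> V" and ce: "adj c e"
    and ne: "d a c + d b e \<noteq> d a e + d b c"
    unfolding hyp_def by blast
  have "d c a < d c b \<and> d e b < d e a \<or> d e a < d e b \<and> d c b < d c a"
    using gdist_adj_cases[OF ab V(1)] gdist_adj_cases[OF ab V(2)] ne
      gdist_sym[OF abV(1) V(1)] gdist_sym[OF abV(1) V(2)] gdist_sym[OF abV(2) V(1)] gdist_sym[OF abV(2) V(2)]
    by arith
  then have "c \<in> W a b \<and> e \<in> W b a \<or> e \<in> W a b \<and> c \<in> W b a"
    using V by (simp add: halfspace_iff)
  moreover have "z = {e, c}"
    using z by (simp add: insert_commute)
  ultimately show "z \<in> {{x, y} | x y. adj x y \<and> x \<in> W a b \<and> y \<in> W b a}"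
    using z ce adj_sym[OF ce] by blast
next
  fix z assume "z \<in> {{x, y} | x y. adj x y \<and> x \<in> W a b \<and> y \<in> W b a}"
  then obtain x y where z: "z = {x, y}" and xy: "adj x y" and x: "x \<in> W a b" and y: "y \<in> W b a"
    by blast
  have V: "a \<in> V" "b \<in> V" "x \<in> V" "y \<in> V"
    using adj_in_V ab xy by auto
  have "d a x + d b y \<noteq> d a y + d b x"
    using halfspace_gdist[OF ab x] halfspace_gdist[OF adj_sym[OF ab] y]
      gdist_sym[OF V(1) V(3)] gdist_sym[OF V(1) V(4)] gdist_sym[OF V(2) V(3)] gdist_sym[OF V(2) V(4)]
    by arith
  then show "z \<in> hyp V adj a b"
    unfolding hyp_def using z xy V by blast
qed

lemma hyp_self:
  assumes "adj c e"
  shows "{c, e} \<in> hyp V adj c e"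
  using assms halfspace_self[OF assms] halfspace_self[OF adj_sym[OF assms]]
  by (auto simp: hyp_eq_separated_edges)

lemma hyp_eq_if_halfspace_eq: "adj a b \<Longrightarrow> adj c e \<Longrightarrow> W c e = W a b \<Longrightarrow> hyp V adj c e = hyp V adj a b"
  by (simp add: hyp_eq_separated_edges halfspace_swap)

lemma halfspace_eq_if_hyp_eq:
  assumes ab: "adj a b" and ce: "adj c e" and eq: "hyp V adj c e = hyp V adj a b"
  shows "W c e = W a b \<or> W e c = W a b"
proof -
  have "{c, e} \<in> hyp V adj a b"
    using hyp_self[OF ce] eq by simp
  then obtain x y where "{c, e} = {x, y}" "adj x y" "x \<in> W a b" "y \<in> W b a"
    using hyp_eq_separated_edges[OF ab] by blast
  moreover have "W x y = W a b"
    using halfspace_crossing_edge[OF ab] calculation(2-4) .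
  ultimately show ?thesis
    by (auto simp: doubleton_eq_iff)
qed

section \<open>Convex subcomplexes and parallelism\<close>

lemma parallel_sym: "parallel V adj A B \<Longrightarrow> parallel V adj B A"
  unfolding parallel_def by simp

lemma parallel_trans: "parallel V adj A B \<Longrightarrow> parallel V adj B C \<Longrightarrow> parallel V adj A C"
  unfolding parallel_def by simp

lemma parallel_edgeE:
  assumes AB: "parallel V adj A B" and ab: "a \<in> A" "b \<in> A" "adj a b"
  obtains c e where "c \<in> B" "e \<in> B" "adj c e" "W c e = W a b"
proof -
  have "hyp V adj a b \<in> {hyp V adj a b | a b. a \<in> B \<and> b \<in> B \<and> adj a b}"
    using AB ab unfolding parallel_def by blast
  then obtain c e where ce: "c \<in> B" "e \<in> B" "adj c e" "hyp V adj c e = hyp V adj a b"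
    by auto
  then have "W c e = W a b \<or> W e c = W a b"
    using halfspace_eq_if_hyp_eq ab(3) by blast
  then show thesis
    using that ce adj_sym by blast
qed

lemma convex_subcomplex_subset_V: "convex_subcomplex V adj A \<Longrightarrow> A \<subseteq> V"
  unfolding convex_subcomplex_def by blast

lemma convex_subcomplex_interval:
  "convex_subcomplex V adj A \<Longrightarrow> u \<in> A \<Longrightarrow> v \<in> A \<Longrightarrow> x \<in> I u v \<Longrightarrow> x \<in> A"
  unfolding convex_subcomplex_def by blast

lemma convex_subcomplex_induct [consumes 3, case_names base step]:
  assumes A: "convex_subcomplex V adj A" and p: "p \<in> A" and x: "x \<in> A"
    and base: "P p"
    and step: "\<And>x x'. x \<in> A \<Longrightarrow> x' \<in> A \<Longrightarrow> adj x x' \<Longrightarrow> P x' \<Longrightarrow> P x"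
  shows "P x"
  using x
proof (induction "d p x" arbitrary: x)
  case 0
  have "p \<in> V" "x \<in> V"
    using p 0 convex_subcomplex_subset_V[OF A] by auto
  then have "p = x"
    using gdist_eq_0_iff 0 by metis
  then show ?case
    using base by simp
next
  case (Suc k x)
  have V: "p \<in> V" "x \<in> V"
    using p Suc.prems convex_subcomplex_subset_V[OF A] by auto
  then have "x \<in> I p x"
    by (simp add: ginterval_iff gdist_refl)
  then obtain x' where x': "adj x x'" "d p x' = k" "x' \<in> I p x"
    using ginterval_stepE[OF V] Suc.hyps(2) by metis
  then have "x' \<in> A"
    using convex_subcomplex_interval[OF A p Suc.prems] by blast
  then show ?case
    using step[OF Suc.prems _ x'(1)] Suc.hyps(1)[OF x'(2)[symmetric]] by blast
qed

lemma convex_gate: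
  assumes A: "convex_subcomplex V adj A" and p: "p \<in> A" and x: "x \<in> V"
    and closest: "\<forall>a\<in>A. d x p \<le> d x a" and a: "a \<in> A"
  shows "d x a = d x p + d p a"
proof -
  have V: "p \<in> V" "a \<in> V"
    using p a convex_subcomplex_subset_V[OF A] by auto
  obtain m where m: "m \<in> I x p" "m \<in> I p a" "m \<in> I x a"
    using median_exists_unique[OF x V] by blast
  have "m \<in> A"
    using convex_subcomplex_interval[OF A p a m(2)] .
  then have "d x p \<le> d x m"
    using closest by blast
  moreover have "m \<in> V" "d x m + d m p = d x p"
    using m(1) by (auto simp: ginterval_iff)
  ultimately have "d m p = 0"
    by simp
  then have "m = p"
    using gdist_eq_0_iff \<open>m \<in> V\<close> V by blast
  then show ?thesis
    using m(3) by (simp add: ginterval_iff)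
qed

lemma parallel_convex_subset:
  assumes A: "convex_subcomplex V adj A" and B: "convex_subcomplex V adj B"
    and AB: "parallel V adj A B" and p: "p \<in> A" "p \<in> B"
  shows "A \<subseteq> B"
proof
  fix x assume "x \<in> A"
  with A p(1) show "x \<in> B"
  proof (induction rule: convex_subcomplex_induct)
    case base
    then show ?case using p(2) .
  next
    case (step x x')
    obtain c e where ce: "c \<in> B" "e \<in> B" "adj c e" "W c e = W x' x"
      using parallel_edgeE[OF AB step(2,1) adj_sym[OF step(3)]] by blast
    have "e \<in> W x x'"
      using halfspace_self[OF adj_sym[OF ce(3)]] halfspace_swap_eq[OF adj_sym[OF step(3)] ce(3,4)] by simp
    then have "d e x' = Suc (d e x)"
      using halfspace_gdist[OF step(3)] by blast
    moreover have V: "x \<in> V" "x' \<in> V" "e \<in> V"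
      using adj_in_V step(3) ce(3) by auto
    ultimately have "x \<in> I x' e"
      using gdist_adj[OF adj_sym[OF step(3)]] gdist_sym[OF V(1,3)] gdist_sym[OF V(2,3)]
      by (simp add: ginterval_iff)
    then show ?case
      using convex_subcomplex_interval[OF B step(4) ce(2)] by blast
  qed
qed

lemma closest_pair:
  assumes "a \<in> A" "b \<in> B"
  obtains p q where "p \<in> A" "q \<in> B" "\<forall>a\<in>A. \<forall>b\<in>B. d p q \<le> d a b"
proof -
  obtain pq where "pq \<in> A \<times> B" "\<forall>ab\<in>A \<times> B. d (fst pq) (snd pq) \<le> d (fst ab) (snd ab)"
    using ex_has_least_nat[of "\<lambda>ab. ab \<in> A \<times> B" "(a, b)" "\<lambda>ab. d (fst ab) (snd ab)"] assms
    by auto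
  then show thesis
    using that by (cases pq) auto
qed

lemma convex_subset_halfspace_of_gate:
  assumes A: "convex_subcomplex V adj A" and q: "q \<in> A" "q \<in> W b a"
    and closest: "\<forall>y\<in>A. d x q \<le> d x y" and ab: "adj a b" and x: "x \<in> W a b"
  shows "A \<subseteq> W b a"
proof
  fix y assume y: "y \<in> A"
  have "x \<in> V" "y \<in> V" "q \<in> V"
    using x y q convex_subcomplex_subset_V[OF A] by (auto simp: halfspace_iff)
  then have "q \<in> I x y"
    using convex_gate[OF A q(1) _ closest y] by (simp add: ginterval_iff)
  then have "y \<notin> W a b"
    using halfspace_convex[OF ab x] q(2) halfspace_swap[OF ab] by blast
  then show "y \<in> W b a"
    using halfspace_swap[OF ab] \<open>y \<in> V\<close> by blast
qed

section \<open>Copying a convex subcomplex across a hyperplane\<close>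

lemma neighbour_across_step:
  assumes pp1: "adj p p1" and xx': "adj x x'" and x: "x \<in> W p p1" and x': "x' \<in> W p p1"
    and x'': "x'' \<in> W p1 p" "adj x' x''" and e: "e \<in> W p1 p" "e \<in> W x x'"
  obtains y where "y \<in> W p1 p" "adj x y"
proof -
  have W'': "W x'' x' = W p1 p"
    using halfspace_crossing_edge[OF adj_sym[OF pp1] adj_sym[OF x''(2)] x''(1) x'] .
  have V: "x \<in> V" "x' \<in> V" "x'' \<in> V" "e \<in> V"
    using adj_in_V xx' x''(2) e(1) by (auto simp: halfspace_iff)
  have "d e x' = Suc (d e x)"
    using halfspace_gdist[OF xx' e(2)] .
  moreover have "d e x' = Suc (d e x'')"
    using halfspace_gdist[OF adj_sym[OF x''(2)]] e(1) W'' by simp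
  ultimately have ex: "d x e = d x'' e" "d x' e = Suc (d x e)"
    using gdist_sym[OF V(1,4)] gdist_sym[OF V(2,4)] gdist_sym[OF V(3,4)] by simp_all
  have "x \<noteq> x''"
    using x x''(1) halfspace_swap[OF pp1] by blast
  then obtain y where y: "adj y x" "adj y x''" "Suc (d y e) = d x e"
    using quadrangle[OF adj_sym[OF xx'] x''(2) _ V(4) ex(1)] by blast
  have "y \<noteq> x'"
    using y(3) ex(2) by auto
  then have "W y x = W x'' x'"
    using square_halfspace[OF adj_sym[OF x''(2)] adj_sym[OF xx'] adj_sym[OF y(1)] y(2)] \<open>x \<noteq> x''\<close>
    by blast
  then have "y \<in> W p1 p"
    using halfspace_self[OF y(1)] W'' by simp
  then show thesis
    using that adj_sym[OF y(1)] by blast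
qed

lemma neighbours_across:
  assumes A1: "convex_subcomplex V adj A1" and par: "parallel V adj A1 A2"
    and pp1: "adj p p1" and p: "p \<in> A1" and sep: "A1 \<subseteq> W p p1" "A2 \<subseteq> W p1 p"
    and u: "u \<in> A1"
  shows "\<exists>u'\<in>W p1 p. adj u u'"
  using A1 p u
proof (induction rule: convex_subcomplex_induct)
  case base
  then show ?case
    using pp1 halfspace_self[OF adj_sym[OF pp1]] by blast
next
  case (step x x')
  obtain x'' where x'': "x'' \<in> W p1 p" "adj x' x''"
    using step(4) by blast
  obtain c e where ce: "c \<in> A2" "e \<in> A2" "adj c e" "W c e = W x' x"
    using parallel_edgeE[OF par step(2,1) adj_sym[OF step(3)]] by blast
  have "e \<in> W x x'"
    using halfspace_self[OF adj_sym[OF ce(3)]] halfspace_swap_eq[OF adj_sym[OF step(3)] ce(3,4)] by simp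
  then obtain y where "y \<in> W p1 p" "adj x y"
    using neighbour_across_step[OF pp1 step(3) _ _ x''] step(1,2) sep ce(2) by blast
  then show ?case by blast
qed

definition copy_across :: "'v set \<Rightarrow> 'v \<Rightarrow> 'v \<Rightarrow> 'v set" where
  "copy_across A p p1 = {v \<in> W p1 p. \<exists>u\<in>A. adj u v}"

lemma gdist_across_eq:
  assumes pp1: "adj p p1" and x: "x \<in> W p p1" and y: "y \<in> W p p1"
    and x': "x' \<in> W p1 p" and y': "y' \<in> W p1 p" and xx': "adj x x'" and yy': "adj y y'"
  shows "d x' y' = d x y"
proof -
  have V: "x \<in> V" "y \<in> V" "x' \<in> V" "y' \<in> V"
    using assms by (auto simp: halfspace_iff)
  have "W x x' = W p p1"
    using halfspace_crossing_edge[OF pp1 xx' x x'] .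
  then have "d y x' = Suc (d y x)"
    using halfspace_gdist[OF xx'] y by simp
  moreover have "W y' y = W p1 p"
    using halfspace_crossing_edge[OF adj_sym[OF pp1] adj_sym[OF yy'] y' y] .
  then have "d x' y = Suc (d x' y')"
    using halfspace_gdist[OF adj_sym[OF yy']] x' by simp
  ultimately show ?thesis
    using gdist_sym[OF V(1,2)] gdist_sym[OF V(2,3)] by simp
qed

lemma edge_across:
  assumes pp1: "adj p p1" and a: "a \<in> W p p1" and b: "b \<in> W p p1"
    and a': "a' \<in> W p1 p" and b': "b' \<in> W p1 p" and aa': "adj a a'" and bb': "adj b b'"
  shows "adj a' b' \<longleftrightarrow> adj a b" and "adj a b \<Longrightarrow> W a' b' = W a b"
proof -
  show iff: "adj a' b' \<longleftrightarrow> adj a b"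
    using gdist_across_eq[OF assms] adj_iff_gdist_1 assms by (simp add: halfspace_iff)
  have "a \<noteq> b'" "b \<noteq> a'"
    using a b a' b' halfspace_swap[OF pp1] by blast+
  then show "adj a b \<Longrightarrow> W a' b' = W a b"
    using square_halfspace[OF _ bb' _ adj_sym[OF aa']] iff adj_sym by blast
qed

lemma interval_in_copy_across:
  assumes A: "convex_subcomplex V adj A" and pp1: "adj p p1" and sub: "A \<subseteq> W p p1"
    and x: "x \<in> A" "adj x x'" "x' \<in> W p1 p" and y: "y \<in> A" "adj y y'" "y' \<in> W p1 p"
    and z: "z \<in> I x' y'"
  shows "z \<in> copy_across A p p1"
proof -
  have V: "x \<in> V" "y \<in> V" "z \<in> V"
    using x y z sub halfspace_subset_V by (auto simp: ginterval_iff)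
  have zW: "z \<in> W p1 p"
    using halfspace_convex[OF adj_sym[OF pp1] x(3) y(3) z] .
  obtain m where m: "m \<in> I z x" "m \<in> I x y" "m \<in> I z y"
    using median_exists_unique[OF V(3) V(1) V(2)] by blast
  have mA: "m \<in> A"
    using convex_subcomplex_interval[OF A x(1) y(1) m(2)] .
  then have mV: "m \<in> V"
    using sub halfspace_subset_V by blast
  txt \<open>The median of z, x, y lies in A and is adjacent to z.\<close>
  have "d z x \<le> d z x' + 1" "d z y \<le> d z y' + 1"
    using gdist_adj_le[OF x(2) V(3)] gdist_adj_le[OF y(2) V(3)] .
  moreover have "d x' z + d z y' = d x' y'" "d x' y' = d x y"
    using z gdist_across_eq[OF pp1 _ _ x(3) y(3) x(2) y(2)] x(1) y(1) sub
    by (auto simp: ginterval_iff)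
  moreover have "d z m + d m x = d z x" "d x m + d m y = d x y" "d z m + d m y = d z y"
    using m by (auto simp: ginterval_iff)
  moreover have "d m x = d x m" "d z x' = d x' z"
    using gdist_sym[OF mV V(1)] gdist_sym[OF V(3)] x(3) halfspace_subset_V by auto
  ultimately have "d z m \<le> 1"
    by linarith
  moreover have "z \<noteq> m"
    using zW mA sub halfspace_swap[OF pp1] by blast
  ultimately have "d m z = 1"
    using gdist_eq_0_iff[OF V(3) mV] gdist_sym[OF V(3) mV] by linarith
  then have "adj m z"
    using adj_iff_gdist_1 V mV by blast
  then show ?thesis
    unfolding copy_across_def using zW mA by blast
qed

lemma convex_copy_across:
  assumes A: "convex_subcomplex V adj A" and pp1: "adj p p1" and sub: "A \<subseteq> W p p1"
    and across: "\<forall>u\<in>A. \<exists>u'\<in>W p1 p. adj u u'"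
  shows "convex_subcomplex V adj (copy_across A p p1)"
  unfolding convex_subcomplex_def
proof (intro conjI ballI subsetI)
  show "copy_across A p p1 \<noteq> {}"
    using A across unfolding convex_subcomplex_def copy_across_def by blast
  show "x \<in> V" if "x \<in> copy_across A p p1" for x
    using that halfspace_subset_V unfolding copy_across_def by blast
  show "z \<in> copy_across A p p1"
    if "x' \<in> copy_across A p p1" "y' \<in> copy_across A p p1" "z \<in> I x' y'" for x' y' z
    using that interval_in_copy_across[OF A pp1 sub] unfolding copy_across_def by blast
qed

lemma parallel_copy_across:
  assumes pp1: "adj p p1" and sub: "A \<subseteq> W p p1" and across: "\<forall>u\<in>A. \<exists>u'\<in>W p1 p. adj u u'"
  shows "parallel V adj (copy_across A p p1) A"
  unfolding parallel_def
proof (intro subset_antisym subsetI)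
  fix h assume "h \<in> {hyp V adj a b | a b. a \<in> copy_across A p p1 \<and> b \<in> copy_across A p p1 \<and> adj a b}"
  then obtain a' b' a b where ab': "h = hyp V adj a' b'" "adj a' b'" "a' \<in> W p1 p" "b' \<in> W p1 p"
    and ab: "a \<in> A" "b \<in> A" "adj a a'" "adj b b'"
    unfolding copy_across_def by blast
  have "adj a b" "W a' b' = W a b"
    using edge_across[OF pp1 _ _ ab'(3,4) ab(3,4)] ab'(2) ab(1,2) sub by blast+
  then have "h = hyp V adj a b"
    using hyp_eq_if_halfspace_eq ab'(1,2) by blast
  then show "h \<in> {hyp V adj a b | a b. a \<in> A \<and> b \<in> A \<and> adj a b}"
    using ab(1,2) \<open>adj a b\<close> by blast
next
  fix h assume "h \<in> {hyp V adj a b | a b. a \<in> A \<and> b \<in> A \<and> adj a b}"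
  then obtain a b where ab: "h = hyp V adj a b" "a \<in> A" "b \<in> A" "adj a b"
    by blast
  obtain a' b' where a'b': "a' \<in> W p1 p" "adj a a'" "b' \<in> W p1 p" "adj b b'"
    using across ab(2,3) by blast
  have "adj a' b'" "W a' b' = W a b"
    using edge_across[OF pp1 _ _ a'b'(1,3) a'b'(2,4)] ab(2-4) sub by blast+
  moreover have "a' \<in> copy_across A p p1" "b' \<in> copy_across A p p1"
    unfolding copy_across_def using a'b' ab(2,3) by blast+
  ultimately show "h \<in> {hyp V adj a b | a b. a \<in> copy_across A p p1 \<and> b \<in> copy_across A p p1 \<and> adj a b}"
    using ab(1,4) hyp_eq_if_halfspace_eq by blast
qed

lemma closest_pair_separating_edge:
  assumes A1: "convex_subcomplex V adj A1" and A2: "convex_subcomplex V adj A2"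
    and par: "parallel V adj A1 A2" and pq: "p \<in> A1" "q \<in> A2"
    and closest: "\<forall>a\<in>A1. \<forall>b\<in>A2. d p q \<le> d a b" and ne: "p \<noteq> q"
  obtains p1 where "adj p p1" "d p1 q < d p q" "A1 \<subseteq> W p p1" "\<forall>u\<in>A1. \<exists>u'\<in>W p1 p. adj u u'"
proof -
  have V: "p \<in> V" "q \<in> V"
    using pq convex_subcomplex_subset_V A1 A2 by blast+
  then obtain m where "d p q = Suc m"
    using ne gdist_eq_0_iff not0_implies_Suc by blast
  then obtain p1 where p1: "adj p p1" "d p1 q < d p q"
    using gdist_SucE[OF V] by (metis lessI)
  have p1V: "p1 \<in> V"
    using adj_in_V p1(1) by blast
  have qW: "q \<in> W p1 p"
    using p1(2) gdist_sym[OF V(2) p1V] gdist_sym[OF V] V(2) by (simp add: halfspace_iff)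
  have sep1: "A1 \<subseteq> W p p1"
    using convex_subset_halfspace_of_gate[OF A1 pq(1) halfspace_self[OF p1(1)] _ adj_sym[OF p1(1)] qW]
      closest pq(2) gdist_sym[OF V(2)] convex_subcomplex_subset_V[OF A1] V(1)
    by (metis subsetD)
  moreover have "A2 \<subseteq> W p1 p"
    using convex_subset_halfspace_of_gate[OF A2 pq(2) qW _ p1(1) halfspace_self[OF p1(1)]]
      closest pq(1) by blast
  ultimately show thesis
    using that p1 neighbours_across[OF A1 par p1(1) pq(1)] by blast
qed

end

section \<open>Free cospecial actions\<close>

lemma translate_doubletons: "translate f {{x, y} | x y. P x y} = {{f x, f y} | x y. P x y}"
  unfolding translate_def by (auto simp: image_iff) (metis image_empty image_insert)

locale cospecial_action = median V adj for V :: "'v set" and adj +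
  fixes G :: "('g, 'b) monoid_scheme" and \<phi> :: "'g \<Rightarrow> 'v \<Rightarrow> 'v"
  assumes isometric: "acts_by_isometries G V adj \<phi>"
    and free: "acts_freely G V adj \<phi>"
    and cospecial: "acts_cospecially G V adj \<phi>"
begin

sublocale group_action G V \<phi>
  using isometric unfolding acts_by_isometries_def by blast

sublocale group G
  using group_hom group_hom.axioms(1) by blast

lemma action_adj_iff: "g \<in> carrier G \<Longrightarrow> a \<in> V \<Longrightarrow> b \<in> V \<Longrightarrow> adj (\<phi> g a) (\<phi> g b) \<longleftrightarrow> adj a b"
  using isometric unfolding acts_by_isometries_def by blast

lemma action_adj: "g \<in> carrier G \<Longrightarrow> adj a b \<Longrightarrow> adj (\<phi> g a) (\<phi> g b)"
  using action_adj_iff adj_in_V by blast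

lemma action_one: "x \<in> V \<Longrightarrow> \<phi> \<one>\<^bsub>G\<^esub> x = x"
  using id_eq_one by (metis restrict_apply')

lemma walk_action: "g \<in> carrier G \<Longrightarrow> walk V adj xs \<Longrightarrow> walk V adj (map (\<phi> g) xs)"
  using element_image action_adj unfolding walk_def by auto

lemma gdist_action_le:
  assumes g: "g \<in> carrier G" and V: "a \<in> V" "b \<in> V"
  shows "d (\<phi> g a) (\<phi> g b) \<le> d a b"
proof -
  obtain xs where xs: "walk V adj xs" "hd xs = a" "last xs = b" "length xs = Suc (d a b)"
    using shortest_walk[OF V] by blast
  then have "xs \<noteq> []"
    by auto
  with xs show ?thesis
    by (intro gdist_le_walk[OF walk_action[OF g xs(1)]]) (auto simp: hd_map last_map)
qed

lemma gdist_action: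
  assumes g: "g \<in> carrier G" and V: "a \<in> V" "b \<in> V"
  shows "d (\<phi> g a) (\<phi> g b) = d a b"
proof -
  have "d (\<phi> (inv\<^bsub>G\<^esub> g) (\<phi> g a)) (\<phi> (inv\<^bsub>G\<^esub> g) (\<phi> g b)) \<le> d (\<phi> g a) (\<phi> g b)"
    using gdist_action_le g V element_image by blast
  then show ?thesis
    using gdist_action_le[OF assms] orbit_sym_aux g V by simp
qed

lemma halfspace_action:
  assumes g: "g \<in> carrier G" and V: "a \<in> V" "b \<in> V"
  shows "\<phi> g ` W a b = W (\<phi> g a) (\<phi> g b)"
proof -
  have "W (\<phi> g a) (\<phi> g b) \<subseteq> \<phi> g ` V"
    using surj_prop[OF g] halfspace_subset_V by blast
  then show ?thesis
    using gdist_action[OF g] element_image[OF g] V by (auto simp: halfspace_iff)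
qed

lemma translate_hyp:
  assumes g: "g \<in> carrier G" and ab: "adj a b"
  shows "translate (\<phi> g) (hyp V adj a b) = hyp V adj (\<phi> g a) (\<phi> g b)"
proof -
  have V: "a \<in> V" "b \<in> V"
    using adj_in_V ab by auto
  have "translate (\<phi> g) (hyp V adj a b) = {{\<phi> g x, \<phi> g y} | x y. adj x y \<and> x \<in> W a b \<and> y \<in> W b a}"
    unfolding hyp_eq_separated_edges[OF ab] translate_doubletons ..
  also have "\<dots> = {{x, y} | x y. adj x y \<and> x \<in> \<phi> g ` W a b \<and> y \<in> \<phi> g ` W b a}"
  proof (intro subset_antisym subsetI)
    fix z assume "z \<in> {{\<phi> g x, \<phi> g y} | x y. adj x y \<and> x \<in> W a b \<and> y \<in> W b a}"
    then obtain x y where "z = {\<phi> g x, \<phi> g y}" "adj x y" "x \<in> W a b" "y \<in> W b a"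
      by blast
    then show "z \<in> {{x, y} | x y. adj x y \<and> x \<in> \<phi> g ` W a b \<and> y \<in> \<phi> g ` W b a}"
      using action_adj[OF g] by blast
  next
    fix z assume "z \<in> {{x, y} | x y. adj x y \<and> x \<in> \<phi> g ` W a b \<and> y \<in> \<phi> g ` W b a}"
    then obtain x y where xy: "z = {\<phi> g x, \<phi> g y}" "adj (\<phi> g x) (\<phi> g y)" "x \<in> W a b" "y \<in> W b a"
      by blast
    then have "adj x y"
      using action_adj_iff[OF g] halfspace_subset_V by blast
    with xy show "z \<in> {{\<phi> g x, \<phi> g y} | x y. adj x y \<and> x \<in> W a b \<and> y \<in> W b a}"
      by blast
  qed
  also have "\<dots> = hyp V adj (\<phi> g a) (\<phi> g b)"
    using hyp_eq_separated_edges[OF action_adj[OF g ab]] halfspace_action[OF g] V by simp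
  finally show ?thesis .
qed

lemma image_action_mult:
  "g \<in> carrier G \<Longrightarrow> h \<in> carrier G \<Longrightarrow> S \<subseteq> V \<Longrightarrow> \<phi> (g \<otimes>\<^bsub>G\<^esub> h) ` S = \<phi> g ` \<phi> h ` S"
  using composition_rule by (force simp: image_image)

lemma is_cube_singleton: "p \<in> V \<Longrightarrow> is_cube V adj {p}"
  unfolding is_cube_def
proof (intro conjI exI)
  show "bij_betw (\<lambda>S. p) (Pow {..<0::nat}) {p}"
    by (auto simp: bij_betw_def inj_on_def)
  show "\<forall>S\<in>Pow {..<0::nat}. \<forall>T\<in>Pow {..<0}. adj p p \<longleftrightarrow> card (S - T \<union> (T - S)) = 1"
    using adj_irrefl by auto
qed simp

lemma action_fixing_vertex: "g \<in> carrier G \<Longrightarrow> x \<in> V \<Longrightarrow> \<phi> g x = x \<Longrightarrow> g = \<one>\<^bsub>G\<^esub>"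
  using free is_cube_singleton unfolding acts_freely_def by fastforce

lemma no_self_intersection:
  "H \<in> hyperplanes V adj \<Longrightarrow> g \<in> carrier G \<Longrightarrow> \<not> crosses V adj H (translate (\<phi> g) H)"
  using conjunct1[OF cospecial[unfolded acts_cospecially_def]] by blast

lemma two_sided: "adj a b \<Longrightarrow> g \<in> carrier G \<Longrightarrow> \<phi> g ` W a b \<noteq> W b a"
  using conjunct1[OF conjunct2[OF cospecial[unfolded acts_cospecially_def]]] adj_in_V by blast

lemma no_direct_self_osculation:
  assumes "g \<in> carrier G" "adj v w1" "adj v w2" "w1 \<noteq> w2" "\<phi> g ` W v w1 = W v w2"
  shows "(\<exists>h\<in>carrier G. \<phi> h ` {v, w1} = {v, w2}) \<or> spans_square V adj v w1 w2"
proof -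
  have "v \<in> V" "w1 \<in> V" "w2 \<in> V"
    using adj_in_V assms by auto
  with assms show ?thesis
    using conjunct1[OF conjunct2[OF conjunct2[OF cospecial[unfolded acts_cospecially_def]]]]
    by blast
qed

lemma osculating_translate_no_square:
  assumes g: "g \<in> carrier G" and pp1: "adj p p1" and pp2: "adj p p2" and ne: "p1 \<noteq> p2"
    and osc: "\<phi> g ` W p p1 = W p p2"
  shows "\<not> spans_square V adj p p1 p2"
proof
  assume "spans_square V adj p p1 p2"
  then obtain u where u: "u \<in> V" "u \<noteq> p" "adj p1 u" "adj p2 u"
    unfolding spans_square_def by blast
  have V: "p \<in> V" "p1 \<in> V" "p2 \<in> V"
    using adj_in_V pp1 pp2 by auto
  let ?H = "hyp V adj p p1"
  have H: "?H \<in> hyperplanes V adj"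
    unfolding hyperplanes_def using V pp1 by blast
  have "translate (\<phi> g) ?H = hyp V adj p p2"
    using translate_hyp[OF g pp1] hyp_eq_if_halfspace_eq[OF action_adj[OF g pp1] pp2]
      osc halfspace_action[OF g V(1,2)] by simp
  then have "{p, p2} \<in> translate (\<phi> g) ?H"
    using hyp_self[OF pp2] by simp
  moreover have "{p1, p} \<in> ?H"
    using hyp_self[OF pp1] by (simp add: insert_commute)
  moreover have "adj p1 p" "adj u p1"
    using adj_sym pp1 u(3) by blast+
  ultimately have "crosses V adj ?H (translate (\<phi> g) ?H)"
    unfolding crosses_def using V u(1,2,4) pp2 ne by blast
  then show False
    using no_self_intersection[OF H g] by blast
qed

lemma osculating_translate_no_swap:
  assumes g: "g \<in> carrier G" and pp1: "adj p p1" and pp2: "adj p p2" and ne: "p1 \<noteq> p2"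
    and osc: "\<phi> g ` W p p1 = W p p2" and h: "h \<in> carrier G"
  shows "\<phi> h ` {p, p1} \<noteq> {p, p2}"
proof
  assume swap: "\<phi> h ` {p, p1} = {p, p2}"
  have V: "p \<in> V" "p1 \<in> V" "p2 \<in> V"
    using adj_in_V pp1 pp2 by auto
  have "p \<noteq> p1"
    using pp1 adj_irrefl by blast
  then have "\<phi> h p \<noteq> \<phi> h p1"
    using inj_on_eq_iff[OF inj_prop[OF h]] V by blast
  then consider "\<phi> h p = p" "\<phi> h p1 = p2" | "\<phi> h p = p2" "\<phi> h p1 = p"
    using swap by (auto simp: doubleton_eq_iff)
  then show False
  proof cases
    case 1
    then have "h = \<one>\<^bsub>G\<^esub>"
      using action_fixing_vertex h V by blast
    then show False
      using 1 action_one V ne by simp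
  next
    case 2
    have hinv: "\<phi> (inv\<^bsub>G\<^esub> h) p = p1" "\<phi> (inv\<^bsub>G\<^esub> h) p2 = p"
      using orbit_sym_aux h 2 V by blast+
    have "\<phi> (inv\<^bsub>G\<^esub> h \<otimes>\<^bsub>G\<^esub> g) ` W p p1 = \<phi> (inv\<^bsub>G\<^esub> h) ` W p p2"
      using image_action_mult[OF inv_closed[OF h] g halfspace_subset_V] osc by simp
    also have "\<dots> = W p1 p"
      using halfspace_action[OF inv_closed[OF h] V(1,3)] hinv by simp
    finally show False
      using two_sided[OF pp1 m_closed[OF inv_closed[OF h] g]] by blast
  qed
qed

lemma osculating_translate_eq:
  assumes "g \<in> carrier G" "adj p p1" "adj p p2" "\<phi> g ` W p p1 = W p p2"
  shows "p1 = p2"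
proof (rule ccontr)
  assume ne: "p1 \<noteq> p2"
  show False
    using no_direct_self_osculation[OF assms(1-3) ne assms(4)]
      osculating_translate_no_square[OF assms(1-3) ne assms(4)]
      osculating_translate_no_swap[OF assms(1-3) ne assms(4)]
    by blast
qed

lemma stabiliser_preserves_halfspace:
  assumes g: "g \<in> carrier G" "\<phi> g ` A = A" and pp1: "adj p p1" and p: "p \<in> A"
    and sub: "A \<subseteq> W p p1" and across: "\<forall>u\<in>A. \<exists>u'\<in>W p1 p. adj u u'"
  shows "\<phi> g ` W p1 p = W p1 p"
proof -
  have V: "p \<in> V" "p1 \<in> V"
    using adj_in_V pp1 by auto
  have "p \<in> \<phi> g ` A"
    using p g(2) by simp
  then obtain p0 where p0: "p0 \<in> A" "\<phi> g p0 = p"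
    by blast
  obtain v where v: "v \<in> W p1 p" "adj p0 v"
    using across p0(1) by blast
  have gpp1: "adj (\<phi> g p) (\<phi> g p1)"
    using action_adj[OF g(1) pp1] .
  have pv: "adj p (\<phi> g v)"
    using action_adj[OF g(1) v(2)] p0(2) by simp
  have "p \<in> W (\<phi> g p) (\<phi> g p1)" "\<phi> g v \<in> W (\<phi> g p1) (\<phi> g p)"
    using halfspace_action[OF g(1) V] halfspace_action[OF g(1) V(2,1)] p0 sub v(1) by blast+
  then have "W p (\<phi> g v) = W (\<phi> g p) (\<phi> g p1)"
    using halfspace_crossing_edge[OF gpp1 pv] by blast
  then have "\<phi> g ` W p p1 = W p (\<phi> g v)"
    using halfspace_action[OF g(1) V] by simp
  then have "p1 = \<phi> g v"
    using osculating_translate_eq[OF g(1) pp1 pv] by blast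
  then have "W (\<phi> g p1) (\<phi> g p) = W p1 p"
    using halfspace_swap_eq[OF pp1 gpp1] \<open>W p (\<phi> g v) = W (\<phi> g p) (\<phi> g p1)\<close> by simp
  then show ?thesis
    using halfspace_action[OF g(1) V(2,1)] by simp
qed

lemma stabiliser_copy_across:
  assumes g: "g \<in> carrier G" "\<phi> g ` A = A" "\<phi> g ` W p1 p = W p1 p" and A: "A \<subseteq> V"
  shows "\<phi> g ` copy_across A p p1 = copy_across A p p1"
proof (intro subset_antisym subsetI)
  fix y assume "y \<in> \<phi> g ` copy_across A p p1"
  then obtain u v where "y = \<phi> g v" "v \<in> W p1 p" "u \<in> A" "adj u v"
    unfolding copy_across_def by blast
  then show "y \<in> copy_across A p p1"
    unfolding copy_across_def using g action_adj by blast
next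
  fix y assume "y \<in> copy_across A p p1"
  then obtain u where y: "y \<in> W p1 p" "u \<in> A" "adj u y"
    unfolding copy_across_def by blast
  then have "u \<in> \<phi> g ` A" "y \<in> \<phi> g ` W p1 p"
    using g by simp_all
  then obtain u0 v0 where "u = \<phi> g u0" "u0 \<in> A" "y = \<phi> g v0" "v0 \<in> W p1 p"
    by blast
  moreover from this have "adj u0 v0"
    using action_adj_iff[OF g(1)] A halfspace_subset_V y(3) by blast
  ultimately show "y \<in> \<phi> g ` copy_across A p p1"
    unfolding copy_across_def by blast
qed

lemma stabiliser_parallel:
  assumes g: "g \<in> carrier G" and A1: "convex_subcomplex V adj A1" and A2: "convex_subcomplex V adj A2"
    and par: "parallel V adj A1 A2" and gA1: "\<phi> g ` A1 = A1"
  shows "\<phi> g ` A2 = A2"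
proof -
  obtain p q where "p \<in> A1" "q \<in> A2"
    using A1 A2 unfolding convex_subcomplex_def by blast
  with A1 par gA1 show ?thesis
  proof (induction "d p q" arbitrary: A1 p q rule: less_induct)
    case less
    note A1 = less.prems(1) and par = less.prems(2) and gA1 = less.prems(3)
    obtain p' q' where pq: "p' \<in> A1" "q' \<in> A2" and closest: "\<forall>a\<in>A1. \<forall>b\<in>A2. d p' q' \<le> d a b"
      using closest_pair less.prems(4,5) by blast
    show ?case
    proof (cases "p' = q'")
      case True
      then have "A1 = A2"
        using parallel_convex_subset[OF A1 A2 par] parallel_convex_subset[OF A2 A1 parallel_sym[OF par]] pq
        by blast
      then show ?thesis
        using gA1 by simp
    next
      case False
      obtain p1 where p1: "adj p' p1" "d p1 q' < d p' q'" and sep1: "A1 \<subseteq> W p' p1"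
        and across: "\<forall>u\<in>A1. \<exists>u'\<in>W p1 p'. adj u u'"
        using closest_pair_separating_edge[OF A1 A2 par pq closest False] .
      define A' where "A' = copy_across A1 p' p1"
      have "convex_subcomplex V adj A'"
        unfolding A'_def using convex_copy_across[OF A1 p1(1) sep1 across] .
      moreover have "parallel V adj A' A2"
        unfolding A'_def using parallel_copy_across[OF p1(1) sep1 across] par
        by (rule parallel_trans)
      moreover have "\<phi> g ` A' = A'"
        unfolding A'_def
        using stabiliser_copy_across[OF g gA1 _ convex_subcomplex_subset_V[OF A1]]
          stabiliser_preserves_halfspace[OF g gA1 p1(1) pq(1) sep1 across] by blast
      moreover have "p1 \<in> A'"
        unfolding A'_def copy_across_def using halfspace_self[OF adj_sym[OF p1(1)]] pq(1) p1(1) by blast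
      moreover have "d p1 q' < d p q"
        using p1(2) closest less.prems(4,5) by fastforce
      ultimately show ?thesis
        using less.hyps pq(2) by blast
    qed
  qed
qed

lemma Stab_subset_if_parallel:
  assumes "convex_subcomplex V adj A1" "convex_subcomplex V adj A2" "parallel V adj A1 A2"
  shows "Stab G \<phi> A1 \<subseteq> Stab G \<phi> A2"
  using stabiliser_parallel[OF _ assms] unfolding Stab_def by blast

end

theorem lemma3p10:
  fixes G :: "('g, 'b) monoid_scheme" and \<phi> :: "'g \<Rightarrow> 'v \<Rightarrow> 'v"
    and V :: "'v set" and adj :: "'v \<Rightarrow> 'v \<Rightarrow> bool" and A1 A2 :: "'v set"
  assumes "cat0_cube_complex V adj"
    and "acts_by_isometries G V adj \<phi>"
    and "acts_freely G V adj \<phi>"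
    and "acts_cospecially G V adj \<phi>"
    and "convex_subcomplex V adj A1" and "convex_subcomplex V adj A2"
    and "parallel V adj A1 A2"
    and "\<forall>g\<in>carrier G. \<forall>A\<in>{A1, A2}. \<phi> g ` A = A \<or> \<phi> g ` A \<inter> A = {}"
  shows "Stab G \<phi> A1 = Stab G \<phi> A2"
proof -
  interpret cospecial_action V adj G \<phi>
    using assms(1-4) by unfold_locales
  show ?thesis
    using Stab_subset_if_parallel assms(5-7) parallel_sym by blast
qed

end
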